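(* Let $G$ be a finite simple graph and let $q \ge p \ge 0$ be integers. Then $\alpha_q(G) \le \left\lceil \frac{q+1}{p+1} \right\rceil \alpha_p(G)$.
   Context: For a graph $G=(V,E)$ and an integer $k\ge 0$, a $k$-independent set is a set $S\subseteq V$ such that the induced subgraph $G[S]$ has maximum degree at most $k$; $\alpha_k(G)$ denotes the maximum cardinality of a $k$-independent set of $G$ (so $\alpha_0(G)$ is the usual independence number). *)

theory Defs
  imports Complex_Main
begin

definition simple_graph :: "'a set \<Rightarrow> 'a set set \<Rightarrow> bool" where
  "simple_graph V E \<longleftrightarrow> finite V \<and> (\<forall>e\<in>E. e \<subseteq> V \<and> card e = 2)"

definition induced_degree :: "'a set set \<Rightarrow> 'a set \<Rightarrow> 'a \<Rightarrow> nat" where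
  "induced_degree E S v = card {u \<in> S. {u, v} \<in> E}"

definition k_independent :: "'a set \<Rightarrow> 'a set set \<Rightarrow> nat \<Rightarrow> 'a set \<Rightarrow> bool" where
  "k_independent V E k S \<longleftrightarrow> S \<subseteq> V \<and> (\<forall>v\<in>S. induced_degree E S v \<le> k)"

definition alpha_k :: "'a set \<Rightarrow> 'a set set \<Rightarrow> nat \<Rightarrow> nat" where
  "alpha_k V E k = Max (card ` {S. k_independent V E k S})"

end

theory Submission
  imports Defs
begin

(* Let k = ceil((q+1)/(p+1)), so that q+1 <= k(p+1), and let S be a maximum
   q-independent set.  Colour S with k colours.  As long as some vertex v has
   more than p neighbours of its own colour, recolour v with a colour in which
   it has at most p neighbours; such a colour exists by pigeonhole, since v has
   at most q < k(p+1) neighbours in S.  Each recolouring strictly decreases the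
   number of monochromatic ordered edges, so the process terminates in a
   colouring whose k colour classes are all p-independent.  Hence
   alpha_q = |S| <= k * alpha_p. *)

lemma card_eq_sum_fibres:
  assumes "finite A" "\<forall>u\<in>A. (f::'a \<Rightarrow> nat) u < k"
  shows "card A = (\<Sum>j<k. card {u\<in>A. f u = j})"
proof -
  have "A = (\<Union>j\<in>{..<k}. {u\<in>A. f u = j})" using assms(2) by auto
  also have "card \<dots> = (\<Sum>j<k. card {u\<in>A. f u = j})"
    by (rule card_UN_disjoint) (use assms(1) in auto)
  finally show ?thesis .
qed

definition colour_degree :: "'a set set \<Rightarrow> 'a set \<Rightarrow> ('a \<Rightarrow> nat) \<Rightarrow> 'a \<Rightarrow> nat \<Rightarrow> nat" where
  "colour_degree E S f v j = card {u\<in>S. {u,v} \<in> E \<and> f u = j}"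

text \<open>The potential of the local search: ordered pairs of adjacent vertices of
  \<open>S\<close> with equal colours.\<close>
definition mono_pairs :: "'a set set \<Rightarrow> 'a set \<Rightarrow> ('a \<Rightarrow> nat) \<Rightarrow> nat" where
  "mono_pairs E S f = card {(u,w). u\<in>S \<and> w\<in>S \<and> {u,w}\<in>E \<and> f u = f w}"

text \<open>Separating the pairs through a fixed vertex \<open>v\<close>: each monochromatic
  neighbour of \<open>v\<close> contributes two ordered pairs (there are no loops).\<close>
lemma mono_pairs_split:
  assumes fin: "finite S" and v: "v \<in> S" and loopless: "{v} \<notin> E"
  shows "mono_pairs E S f =
           card {(u,w). u\<in>S \<and> w\<in>S \<and> u\<noteq>v \<and> w\<noteq>v \<and> {u,w}\<in>E \<and> f u = f w}
           + 2 * colour_degree E S f v (f v)"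
proof -
  let ?A = "{(u,w). u\<in>S \<and> w\<in>S \<and> u\<noteq>v \<and> w\<noteq>v \<and> {u,w}\<in>E \<and> f u = f w}"
  let ?X = "{w\<in>S. {w,v}\<in>E \<and> f w = f v}"
  let ?B = "(\<lambda>w. (v,w)) ` ?X" and ?C = "(\<lambda>w. (w,v)) ` ?X"
  have pairs: "{(u,w). u\<in>S \<and> w\<in>S \<and> {u,w}\<in>E \<and> f u = f w} = ?A \<union> (?B \<union> ?C)"
    using v by (auto simp: insert_commute)
  have fin_A: "finite ?A" by (rule finite_subset[of _ "S \<times> S"]) (use fin in auto)
  have fin_X: "finite ?X" using fin by simp
  have card_B: "card ?B = card ?X" and card_C: "card ?C = card ?X"
    by (auto intro!: card_image simp: inj_on_def)
  have "card (?A \<union> (?B \<union> ?C)) = card ?A + (card ?B + card ?C)"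
    using fin_A fin_X loopless by (subst card_Un_disjoint, auto)+
  then show ?thesis
    unfolding mono_pairs_def colour_degree_def using pairs card_B card_C by simp
qed

lemma mono_pairs_recolour:
  assumes "finite S" and "v \<in> S" and "{v} \<notin> E"
  shows "mono_pairs E S (f(v:=j)) + 2 * colour_degree E S f v (f v)
           = mono_pairs E S f + 2 * colour_degree E S f v j"
proof -
  have rest: "{(u,w). u\<in>S \<and> w\<in>S \<and> u\<noteq>v \<and> w\<noteq>v \<and> {u,w}\<in>E \<and> (f(v:=j)) u = (f(v:=j)) w}
            = {(u,w). u\<in>S \<and> w\<in>S \<and> u\<noteq>v \<and> w\<noteq>v \<and> {u,w}\<in>E \<and> f u = f w}" by auto
  have "colour_degree E S (f(v:=j)) v j = colour_degree E S f v j"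
    unfolding colour_degree_def using assms(3) by (intro arg_cong[where f=card]) auto
  then show ?thesis
    using mono_pairs_split[OF assms, of "f(v:=j)"] mono_pairs_split[OF assms, of f] rest by simp
qed

lemma sparse_colour_exists:
  assumes fin: "finite S" and colours: "\<forall>u\<in>S. f u < k"
    and deg: "card {u\<in>S. {u,v}\<in>E} \<le> q" and kq: "q + 1 \<le> k * (p + 1)"
  shows "\<exists>j<k. colour_degree E S f v j \<le> p"
proof (rule ccontr)
  assume "\<not> ?thesis"
  then have "k * (p + 1) \<le> (\<Sum>j<k. colour_degree E S f v j)"
    using sum_mono[of "{..<k}" "\<lambda>_. p + 1" "colour_degree E S f v"] by fastforce
  also have "\<dots> = card {u\<in>S. {u,v}\<in>E}"
    unfolding colour_degree_def
    using card_eq_sum_fibres[of "{u\<in>S. {u,v}\<in>E}" f k] fin colours by simp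
  finally show False using deg kq by simp
qed

lemma sparse_colouring_exists:
  assumes fin: "finite S" and loopless: "\<forall>v\<in>S. {v} \<notin> E"
    and deg: "\<forall>v\<in>S. card {u\<in>S. {u,v}\<in>E} \<le> q"
    and kq: "q + 1 \<le> k * (p + 1)"
  shows "\<exists>g. (\<forall>u\<in>S. g u < k) \<and> (\<forall>v\<in>S. colour_degree E S g v (g v) \<le> p)"
proof -
  have k_pos: "0 < k" using kq by (cases k) auto
  have "\<forall>u\<in>S. f u < k \<Longrightarrow> ?thesis" for f
  proof (induction f rule: measure_induct_rule[where f="mono_pairs E S"])
    case (less f)
    show ?case
    proof (cases "\<forall>v\<in>S. colour_degree E S f v (f v) \<le> p")
      case True
      then show ?thesis using less.prems by blast
    next
      case False
      then obtain v where v: "v \<in> S" and bad: "p < colour_degree E S f v (f v)" by auto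
      obtain j where j: "j < k" "colour_degree E S f v j \<le> p"
        using sparse_colour_exists[OF fin less.prems] deg v kq by blast
      have "mono_pairs E S (f(v:=j)) < mono_pairs E S f"
        using mono_pairs_recolour[OF fin v, of E f j] loopless v bad j by auto
      moreover have "\<forall>u\<in>S. (f(v:=j)) u < k" using less.prems j by auto
      ultimately show ?thesis using less.IH by blast
    qed
  qed
  from this[of "\<lambda>_. 0"] show ?thesis using k_pos by blast
qed

lemma colour_class_independent:
  assumes "S \<subseteq> V" and "\<forall>v\<in>S. colour_degree E S g v (g v) \<le> p"
  shows "k_independent V E p {u\<in>S. g u = j}"
  unfolding k_independent_def induced_degree_def
proof (intro conjI ballI)
  show "{u\<in>S. g u = j} \<subseteq> V" using assms(1) by auto
next
  fix v assume v: "v \<in> {u\<in>S. g u = j}"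
  then have "{u \<in> {u\<in>S. g u = j}. {u, v} \<in> E} = {u\<in>S. {u,v}\<in>E \<and> g u = g v}" by auto
  moreover have "colour_degree E S g v (g v) \<le> p" using assms(2) v by blast
  ultimately show "card {u \<in> {u\<in>S. g u = j}. {u, v} \<in> E} \<le> p"
    unfolding colour_degree_def by simp
qed

lemma finite_k_independent_cards:
  assumes "finite V"
  shows "finite (card ` {S. k_independent V E k S})"
  by (rule finite_imageI, rule finite_subset[of _ "Pow V"])
     (auto simp: k_independent_def assms)

lemma card_le_alpha_k:
  assumes "finite V" and "k_independent V E k S"
  shows "card S \<le> alpha_k V E k"
  unfolding alpha_k_def using assms by (intro Max_ge[OF finite_k_independent_cards]) auto

lemma alpha_k_attained:
  assumes "finite V"
  shows "\<exists>S. k_independent V E k S \<and> alpha_k V E k = card S"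
proof -
  have "k_independent V E k {}" by (simp add: k_independent_def)
  then show ?thesis
    using Max_in[OF finite_k_independent_cards[OF assms], of E k]
    unfolding alpha_k_def by auto
qed

lemma alpha_k_le_mult:
  assumes G: "simple_graph V E" and kq: "q + 1 \<le> k * (p + 1)"
  shows "alpha_k V E q \<le> k * alpha_k V E p"
proof -
  have fin_V: "finite V" using G by (simp add: simple_graph_def)
  have loopless: "\<forall>v. {v} \<notin> E" using G by (auto simp: simple_graph_def)
  obtain S where S: "k_independent V E q S" "alpha_k V E q = card S"
    using alpha_k_attained[OF fin_V] by blast
  have S_V: "S \<subseteq> V" using S(1) by (simp add: k_independent_def)
  have fin_S: "finite S" using S_V fin_V by (rule finite_subset)
  have deg: "\<forall>v\<in>S. card {u\<in>S. {u,v}\<in>E} \<le> q"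
    using S(1) by (auto simp: k_independent_def induced_degree_def)
  obtain g where g: "\<forall>u\<in>S. g u < k" "\<forall>v\<in>S. colour_degree E S g v (g v) \<le> p"
    using sparse_colouring_exists[OF fin_S _ deg kq] loopless by blast
  have "card S = (\<Sum>j<k. card {u\<in>S. g u = j})" by (rule card_eq_sum_fibres[OF fin_S g(1)])
  also have "\<dots> \<le> (\<Sum>j<k. alpha_k V E p)"
    by (intro sum_mono card_le_alpha_k[OF fin_V] colour_class_independent[OF S_V g(2)])
  finally show ?thesis using S(2) by simp
qed

lemma ceiling_quotient_mult:
  fixes p q :: nat
  shows "q + 1 \<le> nat \<lceil>real (q + 1) / real (p + 1)\<rceil> * (p + 1)"
proof -
  define c where "c = \<lceil>real (q + 1) / real (p + 1)\<rceil>"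
  have "0 \<le> real (q + 1) / real (p + 1)" by simp
  then have c_nonneg: "0 \<le> c" unfolding c_def by linarith
  have "real (q + 1) / real (p + 1) \<le> real_of_int c" unfolding c_def by simp
  then have "real (q + 1) \<le> real (nat c) * real (p + 1)"
    using c_nonneg by (simp add: divide_le_eq)
  then show ?thesis unfolding c_def[symmetric] by (metis of_nat_le_iff of_nat_mult)
qed

text \<open>The main theorem, with \<open>k = \<lceil>(q+1)/(p+1)\<rceil>\<close> colours.\<close>
theorem mainTheorem1:
  fixes V :: "'a set" and E :: "'a set set" and p q :: nat
  assumes "simple_graph V E" and "p \<le> q"
  shows "real (alpha_k V E q) \<le> real_of_int (ceiling (real (q + 1) / real (p + 1))) * real (alpha_k V E p)"
proof -
  let ?k = "nat \<lceil>real (q + 1) / real (p + 1)\<rceil>"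
  have "alpha_k V E q \<le> ?k * alpha_k V E p"
    using alpha_k_le_mult[OF assms(1) ceiling_quotient_mult] .
  then have "real (alpha_k V E q) \<le> real ?k * real (alpha_k V E p)"
    by (metis of_nat_le_iff of_nat_mult)
  then show ?thesis by simp
qed

end
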